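(* Let $D\subset\mathbb N^n$ be finite, not contained in any coordinate hyperplane, $p$ a prime, $\ell\ge1$, and let $\mathbf e_{-1},\mathbf e_0,\dots,\mathbf e_{\ell-1}\in\Sigma_p(D)$ (not necessarily distinct) with $\mathbf e_{-1}=\mathbf e_{\ell-1}$ and $V(\mathbf e_i,\mathbf e_{i-1})\ne\emptyset$ for $0\le i\le\ell-1$. For each $i$ choose $V_i=(v_{i\mathbf d})_{\mathbf d}\in V(\mathbf e_i,\mathbf e_{i-1})$. Then $U=(u_{\mathbf d})$ with $u_{\mathbf d}=\sum_{i=0}^{\ell-1}p^iv_{i\mathbf d}$ is a minimal element of $E_{D,p}(\ell)$ whose support satisfies $\varphi_U(i)=\mathbf e_{\ell-1-i}$ for $0\le i\le\ell-1$.
   Context: $s_p$ = base-$p$ digit sum. $E_{D,p}(r)$ = set of $U=(u_{\mathbf d})\in\{0,\dots,p^r-1\}^D$ with $\sum u_{\mathbf d}\mathbf d\equiv0\pmod{p^r-1}$ and all coordinates of $\sum u_{\mathbf d}\mathbf d$ positive; $s_p(U)=\sum s_p(u_{\mathbf d})$; $\delta_p(D)=\frac1{p-1}\min_{r\ge1}\min_{U\in E_{D,p}(r)}s_p(U)/r$; minimal means $s_p(U)=(p-1)r\delta_p(D)$. Shift $\delta_r$: $k\mapsto pk\bmod(p^r-1)$ for $k\le p^r-2$, $p^r-1\mapsto p^r-1$, coordinatewise. $\varphi_U(j)=\frac1{p^r-1}\sum\mathbf d(\delta_r^jU)_{\mathbf d}$ for $j\in\mathbb Z/r\mathbb Z$;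 irreducible means $\varphi_U$ injective; $MI_{D,p}$ = minimal irreducible elements of all lengths; $\Sigma_p(D)=\bigcup_{U\in MI_{D,p}}\mathrm{Im}\varphi_U$. $\psi(U)=(u_{\mathbf d}\bmod p)_{\mathbf d}$; $V(\mathbf e,\mathbf e')=\{\psi(U):U\in MI_{D,p},\varphi_U(-1)=\mathbf e,\varphi_U(0)=\mathbf e'\}$. *)

theory Defs
  imports Complex_Main "HOL-Computational_Algebra.Primes"
begin

text \<open>Exponent vectors d in N^n are functions 'n => nat for a finite index type 'n.
  A tuple U = (u_d)_{d in D} is a function (('n => nat) => nat) vanishing outside D.\<close>

function digit_sum :: "nat \<Rightarrow> nat \<Rightarrow> nat" where
  "digit_sum p k = (if p < 2 \<or> k = 0 then 0 else k mod p + digit_sum p (k div p))"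
  by pat_completeness auto
termination
  by (relation "measure snd") auto

definition sp :: "('n \<Rightarrow> nat) set \<Rightarrow> nat \<Rightarrow> (('n \<Rightarrow> nat) \<Rightarrow> nat) \<Rightarrow> nat" where
  "sp D p U = (\<Sum>d\<in>D. digit_sum p (U d))"

definition wsum :: "('n \<Rightarrow> nat) set \<Rightarrow> (('n \<Rightarrow> nat) \<Rightarrow> nat) \<Rightarrow> 'n \<Rightarrow> nat" where
  "wsum D U i = (\<Sum>d\<in>D. U d * d i)"

definition E :: "('n \<Rightarrow> nat) set \<Rightarrow> nat \<Rightarrow> nat \<Rightarrow> (('n \<Rightarrow> nat) \<Rightarrow> nat) set" where
  "E D p r = {U. (\<forall>d. d \<notin> D \<longrightarrow> U d = 0) \<and> (\<forall>d\<in>D. U d \<le> p ^ r - 1)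
      \<and> (\<forall>i. (p ^ r - 1) dvd wsum D U i) \<and> (\<forall>i. wsum D U i > 0)}"

definition delta :: "('n \<Rightarrow> nat) set \<Rightarrow> nat \<Rightarrow> real" where
  "delta D p = (1 / (real p - 1)) *
     Inf {real (sp D p U) / real r | r U. r \<ge> 1 \<and> U \<in> E D p r}"

definition minimal :: "('n \<Rightarrow> nat) set \<Rightarrow> nat \<Rightarrow> nat \<Rightarrow> (('n \<Rightarrow> nat) \<Rightarrow> nat) \<Rightarrow> bool" where
  "minimal D p r U \<longleftrightarrow> r \<ge> 1 \<and> U \<in> E D p r \<and>
     real (sp D p U) = (real p - 1) * real r * delta D p"

definition shift1 :: "nat \<Rightarrow> nat \<Rightarrow> nat \<Rightarrow> nat" where
  "shift1 p r k = (if k = p ^ r - 1 then p ^ r - 1 else (p * k) mod (p ^ r - 1))"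

definition shift :: "nat \<Rightarrow> nat \<Rightarrow> (('n \<Rightarrow> nat) \<Rightarrow> nat) \<Rightarrow> (('n \<Rightarrow> nat) \<Rightarrow> nat)" where
  "shift p r U = (\<lambda>d. shift1 p r (U d))"

text \<open>phi_U(j), for j in Z/rZ represented by j mod r.\<close>
definition phi :: "('n \<Rightarrow> nat) set \<Rightarrow> nat \<Rightarrow> nat \<Rightarrow> (('n \<Rightarrow> nat) \<Rightarrow> nat) \<Rightarrow> int \<Rightarrow> ('n \<Rightarrow> nat)" where
  "phi D p r U j = (\<lambda>i. wsum D ((shift p r ^^ nat (j mod int r)) U) i div (p ^ r - 1))"

definition irreducible_elt :: "('n \<Rightarrow> nat) set \<Rightarrow> nat \<Rightarrow> nat \<Rightarrow> (('n \<Rightarrow> nat) \<Rightarrow> nat) \<Rightarrow> bool" where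
  "irreducible_elt D p r U \<longleftrightarrow> inj_on (phi D p r U) {0..<int r}"

definition MI :: "('n \<Rightarrow> nat) set \<Rightarrow> nat \<Rightarrow> (nat \<times> (('n \<Rightarrow> nat) \<Rightarrow> nat)) set" where
  "MI D p = {(r, U). minimal D p r U \<and> irreducible_elt D p r U}"

definition Sigma_p :: "('n \<Rightarrow> nat) set \<Rightarrow> nat \<Rightarrow> ('n \<Rightarrow> nat) set" where
  "Sigma_p D p = (\<Union>(r, U)\<in>MI D p. phi D p r U ` {0..<int r})"

definition psi :: "nat \<Rightarrow> (('n \<Rightarrow> nat) \<Rightarrow> nat) \<Rightarrow> (('n \<Rightarrow> nat) \<Rightarrow> nat)" where
  "psi p U = (\<lambda>d. U d mod p)"

definition V :: "('n \<Rightarrow> nat) set \<Rightarrow> nat \<Rightarrow> ('n \<Rightarrow> nat) \<Rightarrow> ('n \<Rightarrow> nat) \<Rightarrow> (('n \<Rightarrow> nat) \<Rightarrow> nat) set" where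
  "V D p e e' = {psi p U | r U. (r, U) \<in> MI D p \<and> phi D p r U (-1) = e \<and> phi D p r U 0 = e'}"

end

theory Submission
  imports Defs
begin

text \<open>Choose minimal irreducible elements \<open>W i\<close> of lengths \<open>r i\<close> realising the \<open>V i\<close>, and split
  \<open>W i = V i + p * T i\<close> into its lowest base-\<open>p\<close> digit and its upper \<open>r i - 1\<close> digits. Since
  \<open>\<phi>(-1)\<close> comes from the rotation moving the lowest digit to the top, both parts satisfy linear
  relations between \<open>\<phi>(0) = e (i - 1)\<close> and \<open>\<phi>(-1) = e i\<close>, and these relations telescope under
  base-\<open>p\<close> concatenation. Concatenating the \<open>V i\<close> gives \<open>U \<in> E(\<ell>)\<close>; every rotation of \<open>U\<close> is again
  such a concatenation, which computes \<open>\<phi>\<^sub>U\<close>. Concatenating the \<open>T i\<close> in reverse order gives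
  \<open>C \<in> E(M)\<close> with \<open>M = \<Sum>(r i - 1)\<close>. Digit sums add under concatenation, so
  \<open>s(U) + s(C) = (p - 1) \<delta> (\<ell> + M)\<close>, while \<open>s(U) \<ge> (p - 1) \<delta> \<ell>\<close> and \<open>s(C) \<ge> (p - 1) \<delta> M\<close> by
  definition of \<open>\<delta>\<close>; hence both bounds are equalities and \<open>U\<close> is minimal.\<close>

declare digit_sum.simps[simp del]

lemma digit_sum_0 [simp]: "digit_sum p 0 = 0"
  by (simp add: digit_sum.simps)

lemma digit_sum_step:
  assumes "p \<ge> 2"
  shows "digit_sum p k = k mod p + digit_sum p (k div p)"
  using assms by (cases "k = 0") (simp_all add: digit_sum.simps[of p k])

lemma digit_sum_concat:
  assumes p: "p \<ge> 2" and "b < p ^ m"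
  shows "digit_sum p (b + p ^ m * a) = digit_sum p b + digit_sum p a"
  using assms(2)
proof (induction m arbitrary: b)
  case 0
  then show ?case by simp
next
  case (Suc m)
  have "b div p < p ^ m"
    using Suc.prems p by (simp add: div_less_iff_less_mult mult.commute)
  moreover have "(b + p ^ Suc m * a) mod p = b mod p"
    and "(b + p ^ Suc m * a) div p = b div p + p ^ m * a"
    using p by (simp_all add: mult.assoc)
  ultimately show ?case
    using Suc.IH digit_sum_step[OF p, of "b + p ^ Suc m * a"] digit_sum_step[OF p, of b] by simp
qed

lemma sp_concat:
  assumes "p \<ge> 2" and "\<forall>d\<in>D. Y d < p ^ m"
  shows "sp D p (\<lambda>d. Y d + p ^ m * X d) = sp D p Y + sp D p X"
  unfolding sp_def using assms by (simp add: digit_sum_concat sum.distrib)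

lemma wsum_add_mult: "wsum D (\<lambda>d. X d + c * Y d) i = wsum D X i + c * wsum D Y i"
  unfolding wsum_def by (simp add: sum.distrib sum_distrib_left algebra_simps)

lemma wsum_cong: "(\<And>d. d \<in> D \<Longrightarrow> X d = Y d) \<Longrightarrow> wsum D X i = wsum D Y i"
  unfolding wsum_def by (rule sum.cong) auto

lemma concat_less_power:
  fixes p :: nat
  assumes "x < p ^ a" "y < p ^ b"
  shows "x + p ^ a * y < p ^ (a + b)"
proof -
  have "x + p ^ a * y < p ^ a * (y + 1)" using assms(1) by simp
  also have "\<dots> \<le> p ^ a * p ^ b" using assms(2) by (intro mult_left_mono) auto
  finally show ?thesis by (simp add: power_add)
qed

lemma concat_eq_max_iff:
  fixes a t P :: nat
  assumes "a < P" "t < p"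
  shows "a + P * t = P * p - 1 \<longleftrightarrow> a = P - 1 \<and> t = p - 1"
proof -
  have max: "P * p - 1 = (P - 1) + P * (p - 1)"
    using assms by (cases p) (auto simp: algebra_simps)
  have "a + P * t = (P - 1) + P * (p - 1) \<longleftrightarrow> a = P - 1 \<and> t = p - 1"
  proof
    assume *: "a + P * t = (P - 1) + P * (p - 1)"
    have digits: "(c + P * q) mod P = c \<and> (c + P * q) div P = q" if "c < P" for c q
      using that by simp
    show "a = P - 1 \<and> t = p - 1"
      using digits[of a t] digits[of "P - 1" "p - 1"] assms * by auto
  qed simp
  then show ?thesis using max by simp
qed

lemma shift1_top_digit:
  assumes p: "p \<ge> 2" and l: "l \<ge> 1" and a: "a < p ^ (l - 1)" and t: "t < p"
  shows "shift1 p l (a + p ^ (l - 1) * t) = t + p * a"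
proof -
  define P where "P = p ^ (l - 1)"
  have pl: "p ^ l = P * p" using l power_minus_mult[of l p] by (simp add: P_def)
  have aP: "a < P" using a by (simp add: P_def)
  have "P > 0" using p by (simp add: P_def)
  show ?thesis
  proof (cases "a = P - 1 \<and> t = p - 1")
    case True
    then have "a + P * t = p ^ l - 1" "t + p * a = p ^ l - 1"
      using concat_eq_max_iff[OF aP t] concat_eq_max_iff[OF t aP] pl by (simp_all add: mult.commute)
    then show ?thesis by (simp add: shift1_def P_def)
  next
    case False
    have "a + P * t < p ^ l" "t + p * a < p ^ l"
      using concat_less_power[of a p "l - 1" t 1] concat_less_power[of t p 1 a "l - 1"] a t l
      by (simp_all add: P_def)
    moreover have "a + P * t \<noteq> P * p - 1" "t + p * a \<noteq> P * p - 1"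
      using False concat_eq_max_iff[OF aP t] concat_eq_max_iff[OF t aP] by (auto simp: mult.commute)
    ultimately have lt: "a + P * t < p ^ l - 1" "t + p * a < p ^ l - 1"
      unfolding pl by linarith+
    have "t \<le> P * p * t" "(P * p - 1) * t = P * p * t - t"
      using \<open>P > 0\<close> p by (simp_all add: diff_mult_distrib)
    moreover have "p * (a + P * t) = p * a + P * p * t" by (simp add: algebra_simps)
    ultimately have "p * (a + P * t) = (t + p * a) + (P * p - 1) * t" by linarith
    then have "p * (a + P * t) = (t + p * a) + (p ^ l - 1) * t"
      unfolding pl .
    then have "p * (a + P * t) mod (p ^ l - 1) = t + p * a"
      using lt(2) by simp
    then show ?thesis using lt(1) by (simp add: shift1_def P_def)
  qed
qed

lemma shift1_funpow_rotate:
  assumes p: "p \<ge> 2" and "j \<le> l" "a < p ^ (l - j)" "b < p ^ j"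
  shows "(shift1 p l ^^ j) (a + p ^ (l - j) * b) = b + p ^ j * a"
  using assms(2-4)
proof (induction j arbitrary: a b)
  case 0
  then show ?case by simp
next
  case (Suc j)
  define t where "t = b div p ^ j"
  define b0 where "b0 = b mod p ^ j"
  have b: "b = b0 + p ^ j * t" by (simp add: t_def b0_def)
  have b0: "b0 < p ^ j" using p by (simp add: b0_def)
  have t: "t < p" using Suc.prems(3) p by (simp add: t_def div_less_iff_less_mult)
  have l: "l \<ge> 1" "l - j = Suc (l - Suc j)" using Suc.prems(1) by auto
  have low: "a + p ^ (l - Suc j) * b0 < p ^ (l - 1)"
    using concat_less_power[OF Suc.prems(2) b0] Suc.prems(1) by simp
  have "a + p ^ (l - Suc j) * b = (a + p ^ (l - Suc j) * b0) + p ^ (l - 1) * t"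
    using Suc.prems(1) by (simp add: b algebra_simps power_add[symmetric])
  then have "shift1 p l (a + p ^ (l - Suc j) * b) = (t + p * a) + p ^ (l - j) * b0"
    using shift1_top_digit[OF p l(1) low t] l(2) by (simp add: algebra_simps)
  moreover have "t + p * a < p ^ (l - j)"
    using concat_less_power[of t p 1 a "l - Suc j"] t Suc.prems(2) l(2) by simp
  ultimately have "(shift1 p l ^^ Suc j) (a + p ^ (l - Suc j) * b) = b0 + p ^ j * (t + p * a)"
    using Suc.IH[OF _ _ b0] Suc.prems(1) by (simp only: funpow_Suc_right comp_def)
  then show ?case by (simp add: b algebra_simps)
qed

lemma shift_funpow: "(shift p r ^^ j) U = (\<lambda>d. (shift1 p r ^^ j) (U d))"
  by (induction j) (auto simp: shift_def)

lemma E_wsum_eq_phi0: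
  assumes "U \<in> E D p r"
  shows "wsum D U i = (p ^ r - 1) * phi D p r U 0 i"
  using assms by (simp add: E_def phi_def)

lemma E_phi0_pos:
  assumes "U \<in> E D p r"
  shows "phi D p r U 0 i > 0"
proof -
  have "wsum D U i > 0" using assms by (simp add: E_def)
  then show ?thesis using E_wsum_eq_phi0[OF assms, of i] by (metis mult_0_right neq0_conv)
qed

lemma E_less_power:
  assumes "p \<ge> 2" "U \<in> E D p r" "d \<in> D"
  shows "U d < p ^ r"
proof -
  have "p ^ r > 0" "U d \<le> p ^ r - 1" using assms by (simp_all add: E_def)
  then show ?thesis by linarith
qed

lemma E_div_less_power:
  assumes "p \<ge> 2" "r \<ge> 1" "U \<in> E D p r" "d \<in> D"
  shows "U d div p < p ^ (r - 1)"
proof -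
  have "U d < p ^ (r - 1) * p"
    using E_less_power[OF assms(1,3,4)] power_minus_mult[of r p] assms(2) by simp
  then show ?thesis using assms(1) by (simp add: div_less_iff_less_mult)
qed

lemma E_memI:
  assumes "p \<ge> 2" "r \<ge> 1"
    and "\<forall>d. d \<notin> D \<longrightarrow> U d = 0" "\<forall>d\<in>D. U d < p ^ r"
    and "\<forall>i. wsum D U i = (p ^ r - 1) * c i" "\<forall>i. c i > 0"
  shows "U \<in> E D p r"
proof -
  have "p ^ r - 1 > 0" using assms(1,2) one_less_power[of p r] by simp
  then show ?thesis using assms(3-6) by (auto simp: E_def)
qed

lemma phi_eqI:
  assumes "p ^ r > 1"
    and "\<And>i. wsum D ((shift p r ^^ nat (j mod int r)) U) i = (p ^ r - 1) * c i"
  shows "phi D p r U j = c"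
  using assms by (simp add: phi_def fun_eq_iff)

lemma delta_le_sp:
  assumes "p \<ge> 2" "r \<ge> 1" "U \<in> E D p r"
  shows "(real p - 1) * real r * delta D p \<le> real (sp D p U)"
proof -
  let ?S = "{real (sp D p U) / real r | r U. r \<ge> 1 \<and> U \<in> E D p r}"
  have "bdd_below ?S" by (rule bdd_belowI[of _ 0]) auto
  then have "Inf ?S \<le> real (sp D p U) / real r"
    using assms(2,3) by (intro cInf_lower) blast+
  then have "real r * Inf ?S \<le> real (sp D p U)"
    using assms(2) by (simp add: field_simps)
  moreover have "(real p - 1) * delta D p = Inf ?S"
    using assms(1) by (simp add: delta_def)
  ultimately show ?thesis by (simp add: mult.commute mult.left_commute)
qed

lemma sp_split_low_digit:
  assumes "p \<ge> 2"
  shows "sp D p U = sp D p (psi p U) + sp D p (\<lambda>d. U d div p)"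
proof -
  have "U = (\<lambda>d. psi p U d + p ^ 1 * (U d div p))" by (simp add: psi_def fun_eq_iff)
  moreover have "\<forall>d\<in>D. psi p U d < p ^ 1" using assms by (simp add: psi_def)
  ultimately show ?thesis using sp_concat[OF assms, of D "psi p U" 1] by metis
qed

lemma E_phi_low_high_digits:
  assumes p: "p \<ge> 2" and r: "r \<ge> 1" and U: "U \<in> E D p r"
  shows "wsum D (psi p U) i + phi D p r U 0 i = p * phi D p r U (-1) i"
    and "wsum D (\<lambda>d. U d div p) i + phi D p r U (-1) i = p ^ (r - 1) * phi D p r U 0 i"
proof -
  define N where "N = p ^ r - 1"
  define a where "a = phi D p r U 0 i"
  define b where "b = phi D p r U (-1) i"
  define wV where "wV = wsum D (psi p U) i"
  define wT where "wT = wsum D (\<lambda>d. U d div p) i"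
  have pr: "p ^ r = N + 1" and pr': "p ^ r = p * p ^ (r - 1)"
    using p r power_minus_mult[of r p] by (simp_all add: N_def mult.commute)
  have wU: "wsum D U i = N * a" using E_wsum_eq_phi0[OF U] by (simp add: N_def a_def)
  have "wsum D U i = wsum D (\<lambda>d. psi p U d + p * (U d div p)) i"
    by (rule wsum_cong) (simp add: psi_def)
  then have wU': "wsum D U i = wV + p * wT" by (simp add: wsum_add_mult wV_def wT_def)
  define X where "X = wsum D ((shift p r ^^ (r - 1)) U) i"
  have rotate: "(shift1 p r ^^ (r - 1)) (U d) = U d div p + p ^ (r - 1) * psi p U d" if "d \<in> D" for d
    using shift1_funpow_rotate[of p "r - 1" r "psi p U d" "U d div p"] E_div_less_power[OF p r U that] p r
    by (simp add: psi_def)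
  have X: "X = wT + p ^ (r - 1) * wV"
    unfolding X_def shift_funpow wT_def wV_def wsum_add_mult[symmetric]
    by (rule wsum_cong) (rule rotate)
  have "p * X = p * wT + p ^ r * wV" using X pr' by (simp add: algebra_simps)
  also have "\<dots> = (wV + p * wT) + N * wV" using pr by (simp add: algebra_simps)
  finally have pX: "p * X = N * (a + wV)" using wU wU' by (simp add: algebra_simps)
  have "coprime N p"
    using coprime_diff_one_left_nat[of "p ^ r"] r p by (simp add: N_def)
  moreover have "N dvd p * X" using pX by simp
  ultimately have "N dvd X" by (simp add: coprime_dvd_mult_right_iff)
  moreover have "b = X div N"
    using r by (simp add: b_def X_def phi_def N_def zmod_minus1 nat_diff_distrib)
  ultimately have X_eq: "X = N * b" by simp
  have "N > 0" using p r one_less_power[of p r] by (simp add: N_def)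
  moreover have "N * (p * b) = N * (a + wV)" using pX X_eq by (simp add: algebra_simps)
  ultimately have pb: "p * b = a + wV" by simp
  then show "wV + a = p * b" by simp
  have "p * (wT + b) = (wV + p * wT) + a" using pb by (simp add: algebra_simps)
  also have "\<dots> = p ^ r * a" using wU wU' pr by simp
  finally have "p * (wT + b) = p * (p ^ (r - 1) * a)" by (simp add: pr' mult.assoc)
  then show "wT + b = p ^ (r - 1) * a" using p by (metis mult_left_cancel not_numeral_le_zero)
qed

definition block_concat :: "nat \<Rightarrow> (nat \<Rightarrow> nat) \<Rightarrow> (nat \<Rightarrow> 'a \<Rightarrow> nat) \<Rightarrow> nat \<Rightarrow> 'a \<Rightarrow> nat" where
  "block_concat p w W n d = (\<Sum>k<n. p ^ (\<Sum>j<k. w j) * W k d)"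

lemma block_concat_0 [simp]: "block_concat p w W 0 d = 0"
  by (simp add: block_concat_def)

lemma block_concat_Suc:
  "block_concat p w W (Suc n) d = block_concat p w W n d + p ^ (\<Sum>k<n. w k) * W n d"
  by (simp add: block_concat_def)

lemma sum_lessThan_add:
  fixes f :: "nat \<Rightarrow> 'b::comm_monoid_add"
  shows "(\<Sum>k<m + n. f k) = (\<Sum>k<m. f k) + (\<Sum>k<n. f (m + k))"
  by (induction n) (simp_all add: add.assoc)

lemma block_concat_add:
  "block_concat p w W (m + n) d =
     block_concat p w W m d + p ^ (\<Sum>k<m. w k) * block_concat p (\<lambda>k. w (m + k)) (\<lambda>k. W (m + k)) n d"
proof (induction n)
  case 0
  then show ?case by simp
next
  case (Suc n)
  have "(\<Sum>k<m + n. w k) = (\<Sum>k<m. w k) + (\<Sum>k<n. w (m + k))"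
    by (rule sum_lessThan_add)
  then show ?case
    using Suc.IH by (simp add: block_concat_Suc power_add distrib_left mult.assoc)
qed

lemma block_concat_less:
  assumes "\<forall>k<n. W k d < p ^ w k"
  shows "block_concat p w W n d < p ^ (\<Sum>k<n. w k)"
  using assms
proof (induction n)
  case 0
  then show ?case by simp
next
  case (Suc n)
  then show ?case
    using concat_less_power[of "block_concat p w W n d" p "\<Sum>k<n. w k" "W n d" "w n"]
    by (simp add: block_concat_Suc)
qed

lemma sp_block_concat:
  assumes p: "p \<ge> 2" and "\<forall>k<n. \<forall>d\<in>D. W k d < p ^ w k"
  shows "sp D p (block_concat p w W n) = (\<Sum>k<n. sp D p (W k))"
  using assms(2)
proof (induction n)
  case 0
  then show ?case by (simp add: sp_def)
next
  case (Suc n)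
  have "\<forall>d\<in>D. block_concat p w W n d < p ^ (\<Sum>k<n. w k)"
    using Suc.prems by (simp add: block_concat_less)
  then have "sp D p (block_concat p w W (Suc n)) = sp D p (block_concat p w W n) + sp D p (W n)"
    unfolding block_concat_Suc using sp_concat[OF p] by blast
  then show ?case using Suc by simp
qed

lemma wsum_block_concat:
  assumes "\<forall>k<n. wsum D (W k) i + f k = p ^ w k * f (Suc k)"
  shows "wsum D (block_concat p w W n) i + f 0 = p ^ (\<Sum>k<n. w k) * f n"
  using assms
proof (induction n)
  case 0
  then show ?case by (simp add: wsum_def)
next
  case (Suc n)
  have IH: "wsum D (block_concat p w W n) i + f 0 = p ^ (\<Sum>k<n. w k) * f n"
    using Suc by simp
  have "wsum D (block_concat p w W (Suc n)) i + f 0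
      = (wsum D (block_concat p w W n) i + f 0) + p ^ (\<Sum>k<n. w k) * wsum D (W n) i"
    unfolding block_concat_Suc wsum_add_mult by simp
  also have "\<dots> = p ^ (\<Sum>k<n. w k) * (wsum D (W n) i + f n)"
    by (simp add: distrib_left IH[symmetric])
  also have "\<dots> = p ^ (\<Sum>k<Suc n. w k) * f (Suc n)"
  proof -
    have "wsum D (W n) i + f n = p ^ w n * f (Suc n)" using Suc.prems by simp
    then show ?thesis by (simp add: power_add mult.assoc)
  qed
  finally show ?case .
qed

lemma block_concat_in_E:
  assumes p: "p \<ge> 2" and width: "(\<Sum>k<n. w k) \<ge> 1"
    and bound: "\<forall>k<n. \<forall>d\<in>D. W k d < p ^ w k"
    and zero: "\<forall>k<n. \<forall>d. d \<notin> D \<longrightarrow> W k d = 0"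
    and chain: "\<forall>k<n. \<forall>i. wsum D (W k) i + f k i = p ^ w k * f (Suc k) i"
    and cyclic: "f n = f 0" and pos: "\<forall>i. f 0 i > 0"
  shows "block_concat p w W n \<in> E D p (\<Sum>k<n. w k)"
proof (rule E_memI[OF p width _ _ _ pos])
  show "\<forall>d. d \<notin> D \<longrightarrow> block_concat p w W n d = 0"
    using zero by (simp add: block_concat_def)
  show "\<forall>d\<in>D. block_concat p w W n d < p ^ (\<Sum>k<n. w k)"
    using bound by (simp add: block_concat_less)
  show "\<forall>i. wsum D (block_concat p w W n) i = (p ^ (\<Sum>k<n. w k) - 1) * f 0 i"
  proof
    fix i
    have "wsum D (block_concat p w W n) i + f 0 i = p ^ (\<Sum>k<n. w k) * f 0 i"
      using wsum_block_concat[of n D W i "\<lambda>k. f k i" p w] chain cyclic by simp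
    then show "wsum D (block_concat p w W n) i = (p ^ (\<Sum>k<n. w k) - 1) * f 0 i"
      by (simp add: diff_mult_distrib)
  qed
qed

lemma phi_digit_concat:
  assumes p: "p \<ge> 2" and j: "j < l"
    and digits: "\<forall>k<l. \<forall>d. X k d < p"
    and chain: "\<forall>k<l. \<forall>i. wsum D (X k) i + f k i = p * f (Suc k) i"
    and cyclic: "f l = f 0"
  shows "phi D p l (block_concat p (\<lambda>_. 1) X l) (int j) = f (l - j)"
proof (rule phi_eqI)
  show "p ^ l > 1" using p j one_less_power[of p l] by simp
  define k where "k = l - j"
  define A where "A = block_concat p (\<lambda>_. 1) X k"
  define B where "B = block_concat p (\<lambda>_. 1) (\<lambda>m. X (k + m)) j"
  have l: "l = k + j" using j by (simp add: k_def)
  have A_less: "A d < p ^ (l - j)" and B_less: "B d < p ^ j" for d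
    using block_concat_less[of k X d p "\<lambda>_. 1"] block_concat_less[of j "\<lambda>m. X (k + m)" d p "\<lambda>_. 1"]
      digits l by (simp_all add: A_def B_def)
  have split: "block_concat p (\<lambda>_. 1) X l d = A d + p ^ (l - j) * B d" for d
    using block_concat_add[of p "\<lambda>_. 1" X k j d] l by (simp add: A_def B_def)
  fix i
  have wA: "wsum D A i + f 0 i = p ^ k * f k i"
    using wsum_block_concat[of k D X i "\<lambda>m. f m i" p "\<lambda>_. 1"] chain l by (simp add: A_def)
  have wB: "wsum D B i + f k i = p ^ j * f 0 i"
    using wsum_block_concat[of j D "\<lambda>m. X (k + m)" i "\<lambda>m. f (k + m) i" p "\<lambda>_. 1"] chain l cyclic
    by (simp add: B_def)
  define R where "R = wsum D ((shift p l ^^ nat (int j mod int l)) (block_concat p (\<lambda>_. 1) X l)) i"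
  have "R = wsum D (\<lambda>d. B d + p ^ j * A d) i"
    unfolding R_def shift_funpow split
    using j shift1_funpow_rotate[OF p _ A_less B_less] by simp
  also have "\<dots> = wsum D B i + p ^ j * wsum D A i" by (rule wsum_add_mult)
  finally have "R + f k i = p ^ j * (wsum D A i + f 0 i)"
    using wB by (simp add: algebra_simps)
  also have "\<dots> = p ^ l * f k i"
    using wA l by (simp add: power_add)
  finally show "R = (p ^ l - 1) * f (l - j) i"
    by (simp add: diff_mult_distrib k_def)
qed

definition cyclic_E_chain :: "('n \<Rightarrow> nat) set \<Rightarrow> nat \<Rightarrow> nat \<Rightarrow> (nat \<Rightarrow> nat) \<Rightarrow>
    (nat \<Rightarrow> ('n \<Rightarrow> nat) \<Rightarrow> nat) \<Rightarrow> (nat \<Rightarrow> 'n \<Rightarrow> nat) \<Rightarrow> bool"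
  where "cyclic_E_chain D p l r W f \<longleftrightarrow> f l = f 0 \<and>
    (\<forall>i<l. r i \<ge> 1 \<and> W i \<in> E D p (r i) \<and> phi D p (r i) (W i) 0 = f i \<and> phi D p (r i) (W i) (-1) = f (Suc i))"

definition low_digits_concat ::
    "nat \<Rightarrow> nat \<Rightarrow> (nat \<Rightarrow> ('n \<Rightarrow> nat) \<Rightarrow> nat) \<Rightarrow> ('n \<Rightarrow> nat) \<Rightarrow> nat" where
  "low_digits_concat p l W = block_concat p (\<lambda>_. 1) (\<lambda>i. psi p (W i)) l"

definition high_digits_concat :: "nat \<Rightarrow> nat \<Rightarrow> (nat \<Rightarrow> nat) \<Rightarrow> (nat \<Rightarrow> 'a \<Rightarrow> nat) \<Rightarrow> 'a \<Rightarrow> nat" where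
  "high_digits_concat p l r W = block_concat p (\<lambda>k. r (l - Suc k) - 1) (\<lambda>k d. W (l - Suc k) d div p) l"

lemma cyclic_E_chain_relations:
  assumes p: "p \<ge> 2" and chain: "cyclic_E_chain D p l r W f" and i: "i < l"
  shows "wsum D (psi p (W i)) x + f i x = p * f (Suc i) x"
    and "wsum D (\<lambda>d. W i d div p) x + f (Suc i) x = p ^ (r i - 1) * f i x"
  using E_phi_low_high_digits[OF p, of "r i" "W i" D x] chain i by (simp_all add: cyclic_E_chain_def)

lemma cyclic_E_chain_pos:
  assumes "cyclic_E_chain D p l r W f" "l \<ge> 1"
  shows "f 0 x > 0"
  using E_phi0_pos[of "W 0" D p "r 0" x] assms by (simp add: cyclic_E_chain_def)

lemma cyclic_E_chain_zero:
  assumes "cyclic_E_chain D p l r W f" "i < l" "d \<notin> D"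
  shows "W i d = 0"
  using assms by (simp add: cyclic_E_chain_def E_def)

lemma cyclic_E_chain_high_less:
  assumes p: "p \<ge> 2" and chain: "cyclic_E_chain D p l r W f" and "i < l" "d \<in> D"
  shows "W i d div p < p ^ (r i - 1)"
proof -
  have "r i \<ge> 1" "W i \<in> E D p (r i)" using chain \<open>i < l\<close> by (simp_all add: cyclic_E_chain_def)
  then show ?thesis using E_div_less_power[OF p _ _ \<open>d \<in> D\<close>] by blast
qed

lemma low_digits_concat_in_E:
  assumes p: "p \<ge> 2" and l: "l \<ge> 1" and chain: "cyclic_E_chain D p l r W f"
  shows "low_digits_concat p l W \<in> E D p l"
  using block_concat_in_E[OF p, where w="\<lambda>_. 1" and W="\<lambda>i. psi p (W i)" and f=f]
    cyclic_E_chain_relations(1)[OF p chain] cyclic_E_chain_zero[OF chain]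
    cyclic_E_chain_pos[OF chain l] chain l p
  by (simp add: low_digits_concat_def psi_def cyclic_E_chain_def)

lemma phi_low_digits_concat:
  assumes p: "p \<ge> 2" and chain: "cyclic_E_chain D p l r W f" and j: "j < l"
  shows "phi D p l (low_digits_concat p l W) (int j) = f (l - j)"
  unfolding low_digits_concat_def
proof (rule phi_digit_concat[OF p j])
  show "\<forall>k<l. \<forall>d. psi p (W k) d < p" using p by (simp add: psi_def)
  show "\<forall>k<l. \<forall>i. wsum D (psi p (W k)) i + f k i = p * f (Suc k) i"
    using cyclic_E_chain_relations(1)[OF p chain] by simp
  show "f l = f 0" using chain by (simp add: cyclic_E_chain_def)
qed

lemma high_digits_concat_in_E:
  assumes p: "p \<ge> 2" and l: "l \<ge> 1" and chain: "cyclic_E_chain D p l r W f"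
    and M: "(\<Sum>i<l. r i - 1) \<ge> 1"
  shows "high_digits_concat p l r W \<in> E D p (\<Sum>i<l. r i - 1)"
proof -
  have width: "(\<Sum>k<l. r (l - Suc k) - 1) = (\<Sum>i<l. r i - 1)"
    by (rule sum.nat_diff_reindex)
  have "block_concat p (\<lambda>k. r (l - Suc k) - 1) (\<lambda>k d. W (l - Suc k) d div p) l
      \<in> E D p (\<Sum>k<l. r (l - Suc k) - 1)"
  proof (rule block_concat_in_E[OF p])
    show "\<forall>k<l. \<forall>d\<in>D. W (l - Suc k) d div p < p ^ (r (l - Suc k) - 1)"
      using cyclic_E_chain_high_less[OF p chain] by simp
    show "\<forall>k<l. \<forall>d. d \<notin> D \<longrightarrow> W (l - Suc k) d div p = 0"
      using cyclic_E_chain_zero[OF chain] by simp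
    show "\<forall>k<l. \<forall>x. wsum D (\<lambda>d. W (l - Suc k) d div p) x + f (l - k) x
        = p ^ (r (l - Suc k) - 1) * f (l - Suc k) x"
    proof (intro allI impI)
      fix k x assume "k < l"
      then show "wsum D (\<lambda>d. W (l - Suc k) d div p) x + f (l - k) x
          = p ^ (r (l - Suc k) - 1) * f (l - Suc k) x"
        using cyclic_E_chain_relations(2)[OF p chain, of "l - Suc k" x] by (simp add: Suc_diff_Suc)
    qed
  qed (use M width chain cyclic_E_chain_pos[OF chain l] in \<open>auto simp: cyclic_E_chain_def\<close>)
  then show ?thesis unfolding width by (simp add: high_digits_concat_def)
qed

lemma sp_low_high_digits_concat:
  assumes p: "p \<ge> 2" and chain: "cyclic_E_chain D p l r W f"
  shows "sp D p (low_digits_concat p l W) + sp D p (high_digits_concat p l r W) = (\<Sum>i<l. sp D p (W i))"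
proof -
  have "sp D p (low_digits_concat p l W) = (\<Sum>i<l. sp D p (psi p (W i)))"
    unfolding low_digits_concat_def using p by (simp add: sp_block_concat psi_def)
  moreover have "sp D p (high_digits_concat p l r W) = (\<Sum>k<l. sp D p (\<lambda>d. W (l - Suc k) d div p))"
    unfolding high_digits_concat_def
    by (rule sp_block_concat[OF p]) (intro allI impI ballI cyclic_E_chain_high_less[OF p chain]; simp)
  ultimately have "sp D p (low_digits_concat p l W) + sp D p (high_digits_concat p l r W)
      = (\<Sum>i<l. sp D p (psi p (W i)) + sp D p (\<lambda>d. W i d div p))"
    using sum.nat_diff_reindex[of "\<lambda>i. sp D p (\<lambda>d. W i d div p)" l] by (simp add: sum.distrib)
  also have "\<dots> = (\<Sum>i<l. sp D p (W i))"
    by (intro sum.cong refl) (rule sp_split_low_digit[OF p, symmetric])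
  finally show ?thesis .
qed

lemma minimal_low_digits_concat:
  assumes p: "p \<ge> 2" and l: "l \<ge> 1" and chain: "cyclic_E_chain D p l r W f"
    and W_minimal: "\<forall>i<l. minimal D p (r i) (W i)"
  shows "minimal D p l (low_digits_concat p l W)"
proof -
  define \<delta> where "\<delta> = (real p - 1) * delta D p"
  define M where "M = (\<Sum>i<l. r i - 1)"
  let ?U = "low_digits_concat p l W" and ?C = "high_digits_concat p l r W"
  have U_E: "?U \<in> E D p l" by (rule low_digits_concat_in_E[OF p l chain])
  have U_lower: "real l * \<delta> \<le> real (sp D p ?U)"
    using delta_le_sp[OF p l U_E] by (simp add: \<delta>_def ac_simps)
  have C_lower: "real M * \<delta> \<le> real (sp D p ?C)"
  proof (cases "M = 0")
    case False
    then have "(\<Sum>i<l. r i - 1) \<ge> 1" unfolding M_def by linarith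
    from delta_le_sp[OF p this high_digits_concat_in_E[OF p l chain this]] show ?thesis
      by (simp add: M_def \<delta>_def ac_simps)
  qed simp
  have sum_r: "(\<Sum>i<l. r i) = M + l"
  proof -
    have "(\<Sum>i<l. r i) = (\<Sum>i<l. (r i - 1) + 1)"
      using chain by (intro sum.cong refl) (simp add: cyclic_E_chain_def Suc_le_eq)
    then show ?thesis by (simp add: M_def sum.distrib del: Suc_diff_1 add_Suc_right)
  qed
  have "real (sp D p ?U) + real (sp D p ?C) = (\<Sum>i<l. real (sp D p (W i)))"
    using sp_low_high_digits_concat[OF p chain] by (metis of_nat_add of_nat_sum)
  also have "\<dots> = (\<Sum>i<l. real (r i)) * \<delta>"
    unfolding sum_distrib_right using W_minimal
    by (intro sum.cong refl) (simp add: minimal_def \<delta>_def)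
  also have "\<dots> = (real M + real l) * \<delta>"
    by (metis sum_r of_nat_add of_nat_sum)
  finally have "real (sp D p ?U) = (real p - 1) * real l * delta D p"
    using U_lower C_lower by (simp add: \<delta>_def algebra_simps)
  then show ?thesis using l U_E by (simp add: minimal_def)
qed

theorem corollary2p17:
  fixes D :: "('n::finite \<Rightarrow> nat) set" and p l :: nat
    and e :: "int \<Rightarrow> ('n \<Rightarrow> nat)" and Vs :: "nat \<Rightarrow> (('n \<Rightarrow> nat) \<Rightarrow> nat)"
  assumes "finite D"
    and "\<forall>i. \<exists>d\<in>D. d i \<noteq> 0"
    and "prime p"
    and "l \<ge> 1"
    and "\<forall>i\<in>{-1..int l - 1}. e i \<in> Sigma_p D p"
    and "e (-1) = e (int l - 1)"
    and "\<forall>i\<in>{0..int l - 1}. V D p (e i) (e (i - 1)) \<noteq> {}"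
    and "\<forall>i<l. Vs i \<in> V D p (e (int i)) (e (int i - 1))"
  shows "minimal D p l (\<lambda>d. \<Sum>i<l. p ^ i * Vs i d)
    \<and> (\<forall>i\<in>{0..int l - 1}. phi D p l (\<lambda>d. \<Sum>i<l. p ^ i * Vs i d) i = e (int l - 1 - i))"
proof -
  have p: "p \<ge> 2" using assms(3) by (rule prime_ge_2_nat)
  have "\<forall>i<l. \<exists>r W. Vs i = psi p W \<and> (r, W) \<in> MI D p
      \<and> phi D p r W (-1) = e (int i) \<and> phi D p r W 0 = e (int i - 1)"
    using assms(8) by (auto simp: V_def)
  then obtain r W where W: "\<And>i. i < l \<Longrightarrow> Vs i = psi p (W i) \<and> (r i, W i) \<in> MI D p
      \<and> phi D p (r i) (W i) (-1) = e (int i) \<and> phi D p (r i) (W i) 0 = e (int i - 1)"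
    by metis
  define f where "f k = e (int k - 1)" for k
  define U where "U = low_digits_concat p l W"
  have U: "(\<lambda>d. \<Sum>i<l. p ^ i * Vs i d) = U"
    using W by (auto simp: U_def low_digits_concat_def block_concat_def fun_eq_iff intro!: sum.cong)
  have chain: "cyclic_E_chain D p l r W f"
    using W assms(6) by (auto simp: cyclic_E_chain_def MI_def minimal_def f_def)
  have minimal: "minimal D p l U"
    unfolding U_def using minimal_low_digits_concat[OF p assms(4) chain] W by (simp add: MI_def)
  have "phi D p l U i = e (int l - 1 - i)" if "i \<in> {0..int l - 1}" for i
  proof -
    have "nat i < l" using that by auto
    then show ?thesis
      using phi_low_digits_concat[OF p chain, of "nat i"] that
      by (simp add: U_def f_def of_nat_diff algebra_simps)
  qed
  then show ?thesis using minimal unfolding U by simp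
qed

end
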